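(* There exists a smooth $\varrho$-function, i.e. a $\varrho$-function $\varrho:[\omega_1]^2\to\omega$ such that for every limit ordinal $\lambda<\omega_1$ the numerical sequence $\left(\#F_n^\lambda/n\right)_n$ is bounded, where $F_n^\lambda=\{\beta<\lambda:\varrho(\beta,\lambda)\le n\}$.
   Context: A $\varrho$-function is a map $\varrho:[\omega_1]^2\to\omega$ (write $\varrho(\alpha,\beta)$ for $\alpha<\beta$) such that: (1) $\varrho(\alpha,\gamma)\le\max\{\varrho(\alpha,\beta),\varrho(\beta,\gamma)\}$ for all $\alpha<\beta<\gamma<\omega_1$; (2) $\varrho(\alpha,\beta)\le\max\{\varrho(\alpha,\gamma),\varrho(\beta,\gamma)\}$ for all $\alpha<\beta<\gamma<\omega_1$; (3) $\{\alpha<\beta:\varrho(\alpha,\beta)\le n\}$ is finite for all $\beta<\omega_1$ and $n\in\mathbb N$. *)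

theory Defs
  imports Complex_Main "HOL-Library.Countable_Set"
begin

text \<open>omega_1 is represented by an arbitrary well-ordered type whose universe is
uncountable while every proper initial segment is countable (this determines
the order type omega_1 up to isomorphism).\<close>

definition omega1_type :: "'a::wellorder itself \<Rightarrow> bool" where
  "omega1_type _ \<longleftrightarrow> \<not> countable (UNIV :: 'a set) \<and> (\<forall>x::'a. countable {y. y < x})"

definition rho_function :: "('a::wellorder \<Rightarrow> 'a \<Rightarrow> nat) \<Rightarrow> bool" where
  "rho_function rho \<longleftrightarrow>
     (\<forall>\<alpha> \<beta> \<gamma>. \<alpha> < \<beta> \<and> \<beta> < \<gamma> \<longrightarrow> rho \<alpha> \<gamma> \<le> max (rho \<alpha> \<beta>) (rho \<beta> \<gamma>)) \<and>
     (\<forall>\<alpha> \<beta> \<gamma>. \<alpha> < \<beta> \<and> \<beta> < \<gamma> \<longrightarrow> rho \<alpha> \<beta> \<le> max (rho \<alpha> \<gamma>) (rho \<beta> \<gamma>)) \<and>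
     (\<forall>\<beta> (n::nat). finite {\<alpha>. \<alpha> < \<beta> \<and> rho \<alpha> \<beta> \<le> n})"

definition limit_point :: "'a::wellorder \<Rightarrow> bool" where
  "limit_point lam \<longleftrightarrow> (\<exists>\<beta>. \<beta> < lam) \<and> (\<forall>\<beta>. \<beta> < lam \<longrightarrow> (\<exists>\<gamma>. \<beta> < \<gamma> \<and> \<gamma> < lam))"

definition F_set :: "('a::wellorder \<Rightarrow> 'a \<Rightarrow> nat) \<Rightarrow> 'a \<Rightarrow> nat \<Rightarrow> 'a set" where
  "F_set rho lam n = {\<beta>. \<beta> < lam \<and> rho \<beta> lam \<le> n}"

definition smooth_rho_function :: "('a::wellorder \<Rightarrow> 'a \<Rightarrow> nat) \<Rightarrow> bool" where
  "smooth_rho_function rho \<longleftrightarrow> rho_function rho \<and>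
     (\<forall>lam. limit_point lam \<longrightarrow>
        (\<exists>C::real. \<forall>n::nat. n \<ge> 1 \<longrightarrow> real (card (F_set rho lam n)) / real n \<le> C))"

end

theory Submission
  imports Defs
begin

text \<open>The function \<open>\<rho>\<close> is built column by column, by transfinite recursion on \<open>\<beta>\<close>, with the
invariant that each column \<open>\<rho>(\<cdot>,\<beta>)\<close> satisfies the \<open>\<rho>\<close>-function conditions for triples with
top element \<open>\<beta>\<close> and that \<open>#F\<^sub>n(\<beta>) = o(n)\<close>, where \<open>F\<^sub>n(\<beta>) = {\<alpha> < \<beta>. \<rho>(\<alpha>,\<beta>) \<le> n}\<close>.
At a countable \<open>\<beta>\<close>, choose a nondecreasing sequence \<open>\<beta>\<^sub>k\<close> cofinal in \<open>\<beta>\<close> and weights \<open>h\<^sub>k\<close>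
growing so fast that \<open>h\<^sub>k\<close> dominates every \<open>\<rho>(\<beta>\<^sub>i,\<beta>\<^sub>k)\<close> with \<open>i < k\<close> and that
\<open>2k \<cdot> #F\<^sub>n(\<beta>\<^sub>k) \<le> n\<close> once \<open>n \<ge> h\<^sub>k\<close>. Then put \<open>\<rho>(\<alpha>,\<beta>) = max(\<rho>(\<alpha>,\<beta>\<^sub>k), h\<^sub>k)\<close> for
the least \<open>k\<close> with \<open>\<alpha> \<le> \<beta>\<^sub>k\<close>. The triangle inequalities transfer from the columns of
the \<open>\<beta>\<^sub>k\<close>, and \<open>F\<^sub>n(\<beta>)\<close> is covered by \<open>F\<^sub>n(\<beta>\<^sub>k) \<union> {\<beta>\<^sub>k}\<close> for the largest \<open>k\<close> with
\<open>h\<^sub>k \<le> n\<close>, so the growth stays sublinear.\<close>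

definition rho_column :: "('a::order \<Rightarrow> 'a \<Rightarrow> nat) \<Rightarrow> 'a \<Rightarrow> ('a \<Rightarrow> nat) \<Rightarrow> bool" where
  "rho_column rho b f \<longleftrightarrow>
     (\<forall>x y. x < y \<and> y < b \<longrightarrow> f x \<le> max (rho x y) (f y)) \<and>
     (\<forall>x y. x < y \<and> y < b \<longrightarrow> rho x y \<le> max (f x) (f y)) \<and>
     (\<forall>n. finite {x. x < b \<and> f x \<le> n})"

definition sublinear_column :: "'a::order \<Rightarrow> ('a \<Rightarrow> nat) \<Rightarrow> bool" where
  "sublinear_column b f \<longleftrightarrow> (\<forall>m. \<exists>N. \<forall>n\<ge>N. m * card {x. x < b \<and> f x \<le> n} \<le> n)"

lemma rho_function_iff_columns:
  "rho_function rho \<longleftrightarrow> (\<forall>b. rho_column rho b (\<lambda>x. rho x b))"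
  unfolding rho_function_def rho_column_def by blast

lemma sublinear_column_F_set_ratio_bounded:
  assumes "sublinear_column lam (\<lambda>x. rho x lam)"
  shows "\<exists>C::real. \<forall>n::nat. n \<ge> 1 \<longrightarrow> real (card (F_set rho lam n)) / real n \<le> C"
proof -
  obtain N where N: "\<And>n. n \<ge> N \<Longrightarrow> card (F_set rho lam n) \<le> n"
    using assms[unfolded sublinear_column_def, rule_format, of 1] by (auto simp: F_set_def)
  define C where "C = 1 + real (\<Sum>k<N. card (F_set rho lam k))"
  have "real (card (F_set rho lam n)) / real n \<le> C" if "n \<ge> 1" for n
  proof (cases "n \<ge> N")
    case True
    then have "real (card (F_set rho lam n)) / real n \<le> 1"
      using N[OF True] that by (simp add: divide_le_eq_1)
    also have "1 \<le> C"
      by (simp add: C_def sum_nonneg)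
    finally show ?thesis .
  next
    case False
    have "real (card (F_set rho lam n)) / real n \<le> real (card (F_set rho lam n))"
      using that by (simp add: divide_le_eq mult_le_cancel_left1)
    also have "card (F_set rho lam n) \<le> (\<Sum>k<N. card (F_set rho lam k))"
      using False by (intro member_le_sum) auto
    finally show ?thesis by (simp add: C_def)
  qed
  then show ?thesis by blast
qed

lemma wellorder_column_recursion:
  fixes P :: "('a::wellorder \<Rightarrow> 'a \<Rightarrow> 'b) \<Rightarrow> 'a \<Rightarrow> ('a \<Rightarrow> 'b) \<Rightarrow> bool"
  assumes locality: "\<And>d d' b f. (\<And>x y. y < b \<Longrightarrow> d x y = d' x y) \<Longrightarrow> P d b f = P d' b f"
    and step: "\<And>d b. (\<And>c. c < b \<Longrightarrow> P d c (\<lambda>x. d x c)) \<Longrightarrow> \<exists>f. P d b f"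
  shows "\<exists>rho. \<forall>b. P rho b (\<lambda>x. rho x b)"
proof -
  define r :: "('a \<times> 'a) set" where "r = {(x, y). x < y}"
  have "wf r" unfolding r_def by (rule wf)
  define R where "R = wfrec r (\<lambda>G b. SOME f. P (\<lambda>x c. G c x) b f)"
  define rho where "rho = (\<lambda>x c. R c x)"
  have "P rho b (R b)" for b
  proof (induction b rule: less_induct)
    case (less b)
    have "P (\<lambda>x c. cut R r b c x) b f = P rho b f" for f
      by (rule locality) (simp add: cut_apply r_def rho_def)
    moreover have "R b = (SOME f. P (\<lambda>x c. cut R r b c x) b f)"
      unfolding R_def by (subst wfrec[OF \<open>wf r\<close>]) simp
    moreover have "\<exists>f. P rho b f"
      by (rule step) (use less in \<open>simp add: rho_def\<close>)
    ultimately show ?case by (metis (no_types, lifting) someI_ex)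
  qed
  then show ?thesis by (auto simp: rho_def)
qed

lemma countable_initial_segment_cofinal_incseq:
  fixes b :: "'a::linorder"
  assumes "countable {x. x < b}" "x0 < b"
  obtains g :: "nat \<Rightarrow> 'a" where "\<And>k. g k < b" "mono g" "\<And>x. x < b \<Longrightarrow> \<exists>k. x \<le> g k"
proof
  let ?e = "from_nat_into {x. x < b}"
  have range_e: "range ?e = {x. x < b}"
    using assms by (intro range_from_nat_into) auto
  show "Max (?e ` {..k}) < b" for k
    using Max_in[of "?e ` {..k}"] range_e by auto
  show "mono (\<lambda>k. Max (?e ` {..k}))"
    by (auto intro!: monoI Max_mono)
  show "\<exists>k. x \<le> Max (?e ` {..k})" if "x < b" for x
  proof -
    obtain k where "?e k = x" using range_e \<open>x < b\<close> by (metis mem_Collect_eq rangeE)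
    then show ?thesis by (intro exI[of _ k]) auto
  qed
qed

text \<open>\<open>rho0\<close> extends \<open>\<rho>\<close> by \<open>\<rho>(\<alpha>,\<alpha>) = 0\<close>, so that the triangle inequalities can be used
for non-strict triples \<open>\<alpha> \<le> \<beta> \<le> \<gamma>\<close>.\<close>

definition rho0 :: "('a::order \<Rightarrow> 'a \<Rightarrow> nat) \<Rightarrow> 'a \<Rightarrow> 'a \<Rightarrow> nat" where
  "rho0 rho x y = (if x < y then rho x y else 0)"

locale rho_below =
  fixes rho :: "'a::wellorder \<Rightarrow> 'a \<Rightarrow> nat" and b :: 'a
  assumes columns_below:
    "\<And>c. c < b \<Longrightarrow> rho_column rho c (\<lambda>x. rho x c) \<and> sublinear_column c (\<lambda>x. rho x c)"
begin

lemma rho0_le_max_through: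
  assumes "x \<le> y" "y \<le> z" "z < b"
  shows "rho0 rho x z \<le> max (rho0 rho x y) (rho0 rho y z)"
  using assms columns_below[OF \<open>z < b\<close>]
  by (cases "x = y \<or> y = z") (auto simp: rho0_def rho_column_def)

lemma rho0_le_max_over:
  assumes "x \<le> y" "y \<le> z" "z < b"
  shows "rho0 rho x y \<le> max (rho0 rho x z) (rho0 rho y z)"
  using assms columns_below[OF \<open>z < b\<close>]
  by (cases "x = y \<or> y = z") (auto simp: rho0_def rho_column_def)

end

locale column_extension = rho_below rho b
  for rho :: "'a::wellorder \<Rightarrow> 'a \<Rightarrow> nat" and b :: 'a +
  fixes g :: "nat \<Rightarrow> 'a" and h :: "nat \<Rightarrow> nat"
  assumes g_below: "g k < b"
    and g_mono: "mono g"
    and g_cofinal: "x < b \<Longrightarrow> \<exists>k. x \<le> g k"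
    and h_mono: "mono h"
    and h_ge: "2 * k \<le> h k"
    and h_dominates: "i < k \<Longrightarrow> rho0 rho (g i) (g k) \<le> h k"
    and h_thin: "h k \<le> n \<Longrightarrow> 2 * k * card (F_set rho (g k) n) \<le> n"
begin

definition level :: "'a \<Rightarrow> nat" where
  "level x = (LEAST k. x \<le> g k)"

definition new_column :: "'a \<Rightarrow> nat" where
  "new_column x = max (rho0 rho x (g (level x))) (h (level x))"

lemma le_g_level:
  assumes "x < b"
  shows "x \<le> g (level x)"
proof -
  obtain k where "x \<le> g k"
    using g_cofinal assms by blast
  then show ?thesis
    unfolding level_def by (rule LeastI)
qed

lemma level_mono: "x \<le> y \<Longrightarrow> y < b \<Longrightarrow> level x \<le> level y"
  using le_g_level[of y] unfolding level_def by (intro Least_le) (rule order_trans)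

lemma rho0_g_le_h: "k \<le> m \<Longrightarrow> rho0 rho (g k) (g m) \<le> h m"
  using h_dominates by (cases "k = m") (auto simp: rho0_def)

lemma rho0_up_level:
  assumes "x < b" "level x \<le> m"
  shows "rho0 rho x (g m) \<le> max (rho0 rho x (g (level x))) (h m)"
  using rho0_le_max_through[OF le_g_level[OF \<open>x < b\<close>] monoD[OF g_mono \<open>level x \<le> m\<close>] g_below]
    rho0_g_le_h[OF \<open>level x \<le> m\<close>] by linarith

lemma rho0_down_level:
  assumes "x < b" "level x \<le> m"
  shows "rho0 rho x (g (level x)) \<le> max (rho0 rho x (g m)) (h m)"
  using rho0_le_max_over[OF le_g_level[OF \<open>x < b\<close>] monoD[OF g_mono \<open>level x \<le> m\<close>] g_below]
    rho0_g_le_h[OF \<open>level x \<le> m\<close>] by linarith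

lemma new_column_le_max_through:
  assumes "x < y" "y < b"
  shows "new_column x \<le> max (rho x y) (new_column y)"
proof -
  have "x < b" "level x \<le> level y"
    using assms level_mono by auto
  moreover have "rho0 rho x (g (level y)) \<le> max (rho x y) (rho0 rho y (g (level y)))"
    using rho0_le_max_through[of x y "g (level y)"] assms le_g_level g_below
    by (simp add: rho0_def)
  ultimately show ?thesis
    using rho0_down_level[of x "level y"] monoD[OF h_mono, of "level x" "level y"]
    unfolding new_column_def by linarith
qed

lemma rho_le_max_new_column:
  assumes "x < y" "y < b"
  shows "rho x y \<le> max (new_column x) (new_column y)"
proof -
  have "x < b" "level x \<le> level y"
    using assms level_mono by auto
  moreover have "rho x y \<le> max (rho0 rho x (g (level y))) (rho0 rho y (g (level y)))"
    using rho0_le_max_over[of x y "g (level y)"] assms le_g_level g_below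
    by (simp add: rho0_def)
  ultimately show ?thesis
    using rho0_up_level[of x "level y"] unfolding new_column_def by linarith
qed

lemma top_level_exists:
  assumes "h m \<le> n"
  obtains M where "m \<le> M" "h M \<le> n" "\<And>k. h k \<le> n \<Longrightarrow> k \<le> M"
proof -
  let ?J = "{k. h k \<le> n}"
  have "?J \<subseteq> {..n}"
  proof
    fix k assume "k \<in> ?J"
    then show "k \<in> {..n}" using h_ge[of k] by simp
  qed
  then have "finite ?J" by (rule finite_subset) simp
  then show ?thesis
    using assms by (intro that[of "Max ?J"]) (auto intro: Max_ge Max_in[of ?J, simplified])
qed

lemma new_column_sublevel_subset:
  assumes "h M \<le> n" "\<And>k. h k \<le> n \<Longrightarrow> k \<le> M"
  shows "{x. x < b \<and> new_column x \<le> n} \<subseteq> insert (g M) (F_set rho (g M) n)"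
proof
  fix x assume "x \<in> {x. x < b \<and> new_column x \<le> n}"
  then have "x < b" and small: "rho0 rho x (g (level x)) \<le> n" "h (level x) \<le> n"
    by (auto simp: new_column_def)
  then have "level x \<le> M" using assms(2) by blast
  then have "rho0 rho x (g M) \<le> n" "x \<le> g M"
    using rho0_up_level[OF \<open>x < b\<close>] small assms(1) le_g_level[OF \<open>x < b\<close>] g_mono
    by (fastforce dest: monoD)+
  then show "x \<in> insert (g M) (F_set rho (g M) n)"
    by (auto simp: F_set_def rho0_def order_le_less)
qed

lemma finite_F_set_g: "finite (F_set rho (g k) n)"
  using columns_below[OF g_below] by (simp add: rho_column_def F_set_def)

lemma new_column_sublevel_finite: "finite {x. x < b \<and> new_column x \<le> n}"
proof (cases "\<exists>m. h m \<le> n")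
  case True
  then obtain M where "h M \<le> n" "\<And>k. h k \<le> n \<Longrightarrow> k \<le> M"
    using top_level_exists by metis
  then show ?thesis
    using new_column_sublevel_subset finite_F_set_g by (meson finite_insert finite_subset)
next
  case False
  then have "{x. x < b \<and> new_column x \<le> n} = {}" by (auto simp: new_column_def)
  then show ?thesis by (metis finite.emptyI)
qed

lemma sublinear_new_column: "sublinear_column b new_column"
  unfolding sublinear_column_def
proof (intro allI exI[of _ "h _"] impI)
  fix m n assume "h m \<le> n"
  then obtain M where M: "m \<le> M" "h M \<le> n" "\<And>k. h k \<le> n \<Longrightarrow> k \<le> M"
    using top_level_exists by metis
  let ?F = "F_set rho (g M) n"
  have "card {x. x < b \<and> new_column x \<le> n} \<le> card (insert (g M) ?F)"
    using new_column_sublevel_subset[OF M(2,3)] finite_F_set_g by (intro card_mono) auto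
  also have "\<dots> \<le> card ?F + 1"
    by (simp add: card_insert_if finite_F_set_g)
  finally have "m * card {x. x < b \<and> new_column x \<le> n} \<le> M * (card ?F + 1)"
    by (intro mult_le_mono M(1))
  also have "\<dots> \<le> n"
    using h_thin[OF M(2)] h_ge[of M] M(2) by simp
  finally show "m * card {x. x < b \<and> new_column x \<le> n} \<le> n" .
qed

lemma new_column_valid: "rho_column rho b new_column \<and> sublinear_column b new_column"
  using new_column_le_max_through rho_le_max_new_column new_column_sublevel_finite sublinear_new_column
  by (simp add: rho_column_def)

end

context rho_below
begin

lemma exists_column_extension:
  assumes "countable {x. x < b}" "x0 < b"
  obtains g h where "column_extension rho b g h"
proof -
  obtain g :: "nat \<Rightarrow> 'a" where g: "\<And>k. g k < b" "mono g" "\<And>x. x < b \<Longrightarrow> \<exists>k. x \<le> g k"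
    using countable_initial_segment_cofinal_incseq[OF assms] by blast
  have "\<forall>k. \<exists>N. \<forall>n\<ge>N. 2 * k * card (F_set rho (g k) n) \<le> n"
    using columns_below[OF g(1)] by (auto simp: sublinear_column_def F_set_def)
  then obtain N where N: "\<forall>k. \<forall>n\<ge>N k. 2 * k * card (F_set rho (g k) n) \<le> n"
    by (rule choice[THEN exE])
  define h where "h k = (\<Sum>j\<le>k. (\<Sum>i<j. rho0 rho (g i) (g j)) + 2 * j + N j)" for k
  have h_term: "(\<Sum>i<k. rho0 rho (g i) (g k)) + 2 * k + N k \<le> h k" for k
    unfolding h_def
    by (rule member_le_sum[of k "{..k}" "\<lambda>j. (\<Sum>i<j. rho0 rho (g i) (g j)) + 2 * j + N j"]) auto
  have "column_extension rho b g h"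
  proof (unfold_locales)
    show "mono h"
      unfolding h_def by (intro monoI sum_mono2) auto
    show "2 * k \<le> h k" for k
      using h_term[of k] by simp
    show "2 * k * card (F_set rho (g k) n) \<le> n" if "h k \<le> n" for k n
    proof -
      have "N k \<le> n" using h_term[of k] that by linarith
      then show ?thesis using N by blast
    qed
    show "rho0 rho (g i) (g k) \<le> h k" if "i < k" for i k
    proof -
      have "rho0 rho (g i) (g k) \<le> (\<Sum>i<k. rho0 rho (g i) (g k))"
        using that by (intro member_le_sum) auto
      then show ?thesis using h_term[of k] by linarith
    qed
  qed (use g in auto)
  then show ?thesis by (rule that)
qed

lemma exists_extending_column:
  assumes "countable {x. x < b}"
  shows "\<exists>f. rho_column rho b f \<and> sublinear_column b f"
proof (cases "\<exists>x0. x0 < b")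
  case True
  then obtain g h where "column_extension rho b g h"
    using exists_column_extension[OF assms] by blast
  then show ?thesis using column_extension.new_column_valid by blast
next
  case False
  then show ?thesis by (auto simp: rho_column_def sublinear_column_def)
qed

end

lemma exists_rho_with_sublinear_columns:
  assumes "\<And>b::'a::wellorder. countable {x. x < b}"
  shows "\<exists>rho :: 'a \<Rightarrow> 'a \<Rightarrow> nat. \<forall>b.
           rho_column rho b (\<lambda>x. rho x b) \<and> sublinear_column b (\<lambda>x. rho x b)"
proof (rule wellorder_column_recursion)
  show "(rho_column d b f \<and> sublinear_column b f) = (rho_column d' b f \<and> sublinear_column b f)"
    if "\<And>x y. y < b \<Longrightarrow> d x y = d' x y" for d d' :: "'a \<Rightarrow> 'a \<Rightarrow> nat" and b f
    using that by (auto simp: rho_column_def)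
  show "\<exists>f. rho_column d b f \<and> sublinear_column b f"
    if "\<And>c. c < b \<Longrightarrow> rho_column d c (\<lambda>x. d x c) \<and> sublinear_column c (\<lambda>x. d x c)"
    for d :: "'a \<Rightarrow> 'a \<Rightarrow> nat" and b
  proof -
    interpret rho_below d b
      using that by unfold_locales
    show ?thesis
      using assms by (rule exists_extending_column)
  qed
qed

theorem mainTheorem18:
  assumes "omega1_type TYPE('a::wellorder)"
  shows "\<exists>rho :: 'a \<Rightarrow> 'a \<Rightarrow> nat. smooth_rho_function rho"
proof -
  have "countable {x. x < b}" for b :: 'a
    using assms by (simp add: omega1_type_def)
  then obtain rho :: "'a \<Rightarrow> 'a \<Rightarrow> nat"
    where "\<And>b. rho_column rho b (\<lambda>x. rho x b)" "\<And>b. sublinear_column b (\<lambda>x. rho x b)"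
    using exists_rho_with_sublinear_columns by blast
  then have "smooth_rho_function rho"
    unfolding smooth_rho_function_def rho_function_iff_columns
    using sublinear_column_F_set_ratio_bounded by blast
  then show ?thesis by blast
qed

end
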